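(* Let $A=[a_{ij}]$ be the adjacency matrix of a strongly connected, aperiodic directed graph on $\mathcal X=\{1,\ldots,n\}$ with $a_{nn}=1$, and let $N\ge1$ be such that all entries of $A^N$ are positive. Let $\lambda_A$, $u,v>0$ with $A^Tu=\lambda_Au$, $Av=\lambda_Av$, $\sum_iu_iv_i=1$, $\nu_{RB}(i)=u_iv_i$, $r_{ij}=\frac{v_j}{\lambda_Av_i}a_{ij}$, and $\mathfrak M_{\rm RB}(x_0,\ldots,x_N)=\nu_{RB}(x_0)r_{x_0x_1}\cdots r_{x_{N-1}x_N}$. Let $\mathfrak M^*[\delta_1,\delta_n]$ be the minimizer of $\mathbb D(P\|\mathfrak M_{\rm RB})$ over all probability distributions $P$ on $\mathcal X^{N+1}$ whose marginal at time $0$ is the point mass at node $1$ and whose marginal at time $N$ is the point mass at node $n$. Then $\mathfrak M^*[\delta_1,\delta_n]$ assigns probability $1/(A^N)_{1n}$ to each of the feasible paths of length $N$ from $1$ to $n$, i.e. to each $(x_0,\ldots,x_N)$ with $x_0=1$, $x_N=n$ and $a_{x_tx_{t+1}}=1$ for $t=0,\ldots,N-1$.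
   Context: Relative entropy of a probability distribution $P$ with respect to a nonnegative measure $Q$ on a finite set: $\mathbb D(P\|Q)=\sum_x P(x)\log\frac{P(x)}{Q(x)}$ if $\mathrm{supp}(P)\subseteq\mathrm{supp}(Q)$ (with $0\log0=0$), and $+\infty$ otherwise. *)

theory Defs
  imports Complex_Main "HOL-Library.Extended_Real"
begin

text \<open>Square matrices on the node set {1..n} are represented as functions
  nat => nat => real (only entries with indices in {1..n} matter).\<close>

fun matpow :: "nat \<Rightarrow> (nat \<Rightarrow> nat \<Rightarrow> real) \<Rightarrow> nat \<Rightarrow> nat \<Rightarrow> nat \<Rightarrow> real" where
  "matpow n A 0 i j = (if i = j then 1 else 0)"
| "matpow n A (Suc k) i j = (\<Sum>l\<in>{1..n}. matpow n A k i l * A l j)"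

definition is_adjacency_matrix :: "nat \<Rightarrow> (nat \<Rightarrow> nat \<Rightarrow> real) \<Rightarrow> bool" where
  "is_adjacency_matrix n A \<longleftrightarrow> (\<forall>i\<in>{1..n}. \<forall>j\<in>{1..n}. A i j = 0 \<or> A i j = 1)"

definition strongly_connected :: "nat \<Rightarrow> (nat \<Rightarrow> nat \<Rightarrow> real) \<Rightarrow> bool" where
  "strongly_connected n A \<longleftrightarrow>
     (\<forall>i\<in>{1..n}. \<forall>j\<in>{1..n}. \<exists>k>0. matpow n A k i j > 0)"

definition aperiodic :: "nat \<Rightarrow> (nat \<Rightarrow> nat \<Rightarrow> real) \<Rightarrow> bool" where
  "aperiodic n A \<longleftrightarrow>
     Gcd {k. k > 0 \<and> (\<exists>i\<in>{1..n}. matpow n A k i i > 0)} = 1"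

definition rel_entropy :: "'a set \<Rightarrow> ('a \<Rightarrow> real) \<Rightarrow> ('a \<Rightarrow> real) \<Rightarrow> ereal" where
  "rel_entropy S P Q =
     (if \<forall>x\<in>S. P x \<noteq> 0 \<longrightarrow> Q x \<noteq> 0
      then ereal (\<Sum>x\<in>S. if P x = 0 then 0 else P x * ln (P x / Q x))
      else \<infinity>)"

definition paths :: "nat \<Rightarrow> nat \<Rightarrow> nat list set" where
  "paths n N = {xs. length xs = Suc N \<and> set xs \<subseteq> {1..n}}"

definition is_prob_dist :: "'a set \<Rightarrow> ('a \<Rightarrow> real) \<Rightarrow> bool" where
  "is_prob_dist S P \<longleftrightarrow> (\<forall>x\<in>S. P x \<ge> 0) \<and> (\<Sum>x\<in>S. P x) = 1"

definition bridge_feasible :: "nat \<Rightarrow> nat \<Rightarrow> nat \<Rightarrow> nat \<Rightarrow> (nat list \<Rightarrow> real) \<Rightarrow> bool" where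
  "bridge_feasible n N a b P \<longleftrightarrow> is_prob_dist (paths n N) P \<and>
     (\<forall>y\<in>{1..n}. (\<Sum>xs\<in>{xs\<in>paths n N. xs ! 0 = y}. P xs) = (if y = a then 1 else 0)) \<and>
     (\<forall>y\<in>{1..n}. (\<Sum>xs\<in>{xs\<in>paths n N. xs ! N = y}. P xs) = (if y = b then 1 else 0))"

definition M_RB :: "nat \<Rightarrow> (nat \<Rightarrow> nat \<Rightarrow> real) \<Rightarrow> real \<Rightarrow> (nat \<Rightarrow> real) \<Rightarrow> (nat \<Rightarrow> real)
                    \<Rightarrow> nat list \<Rightarrow> real" where
  "M_RB N A lam u v xs =
     (u (xs ! 0) * v (xs ! 0)) *
     (\<Prod>t<N. v (xs ! Suc t) / (lam * v (xs ! t)) * A (xs ! t) (xs ! Suc t))"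

definition is_bridge_minimizer ::
  "nat \<Rightarrow> nat \<Rightarrow> nat \<Rightarrow> nat \<Rightarrow> (nat list \<Rightarrow> real) \<Rightarrow> (nat list \<Rightarrow> real) \<Rightarrow> bool" where
  "is_bridge_minimizer n N a b M P \<longleftrightarrow> bridge_feasible n N a b P \<and>
     (\<forall>Q. bridge_feasible n N a b Q \<longrightarrow>
          rel_entropy (paths n N) P M \<le> rel_entropy (paths n N) Q M)"

end

theory Submission imports Defs begin

text \<open>On a bridge walk from a to b (correct endpoints, every step an edge) the factors
  v(x_{t+1}) / (\<lambda> v(x_t)) of the Ruelle-Bowen measure telescope, so M_RB takes the constant
  value u(a) v(b) / \<lambda>^N there. Every other path either carries no mass under a distribution
  with marginals \<delta>_a and \<delta>_b, or has a missing edge and hence M_RB-measure 0, where any mass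
  makes the relative entropy infinite. So the relative entropy of an admissible P is its
  divergence from the uniform distribution on the bridge walks, shifted by a constant, and
  Gibbs' inequality makes that uniform distribution the unique minimizer. The number of
  bridge walks is (A^N)_{ab}.\<close>

section \<open>Gibbs' inequality\<close>

definition kl_term :: "real \<Rightarrow> real \<Rightarrow> real" where
  "kl_term p q = (if p = 0 then 0 else p * ln (p / q))"

lemma rel_entropy_eq_sum_kl_term:
  assumes "\<forall>x\<in>S. P x \<noteq> 0 \<longrightarrow> Q x \<noteq> 0"
  shows "rel_entropy S P Q = ereal (\<Sum>x\<in>S. kl_term (P x) (Q x))"
  using assms unfolding rel_entropy_def kl_term_def by simp

lemma kl_term_change_reference:
  assumes "p \<ge> 0" "q > 0" "q' > 0"
  shows "kl_term p q = kl_term p q' + p * ln (q' / q)"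
proof (cases "p > 0")
  case True
  have "ln (p / q) = ln (p / q') + ln (q' / q)"
    using True assms by (simp add: ln_div)
  thus ?thesis using True by (simp add: kl_term_def distrib_left)
qed (use assms in \<open>auto simp: kl_term_def\<close>)

lemma kl_term_ge:
  assumes "p \<ge> 0" "q > 0"
  shows "p - q \<le> kl_term p q"
    and "kl_term p q = p - q \<Longrightarrow> p = q"
proof -
  have pos: "p - q \<le> p * ln (p / q) \<and> (p * ln (p / q) = p - q \<longrightarrow> p = q)" if "p > 0"
  proof -
    have y: "q / p > 0" using that assms by simp
    have ln_y: "ln (q / p) = - ln (p / q)" using that assms by (simp add: ln_div)
    have "p * (1 - q / p) \<le> p * ln (p / q)"
      using ln_le_minus_one[OF y] ln_y that by (intro mult_left_mono) auto
    moreover have "p * (1 - q / p) = p - q" using that by (simp add: field_simps)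
    moreover have "p = q" if "p * ln (p / q) = p - q"
    proof -
      have "ln (q / p) = q / p - 1"
        using that \<open>p * (1 - q / p) = p - q\<close> \<open>p > 0\<close> ln_y by (simp add: field_simps)
      thus ?thesis using ln_eq_minus_one[OF y] \<open>p > 0\<close> by simp
    qed
    ultimately show ?thesis by auto
  qed
  show "p - q \<le> kl_term p q" using pos assms by (cases "p = 0") (auto simp: kl_term_def)
  show "p = q" if "kl_term p q = p - q"
    using pos assms that by (cases "p = 0") (auto simp: kl_term_def)
qed

lemma gibbs_inequality:
  assumes "finite F" "\<forall>x\<in>F. P x \<ge> 0" "\<forall>x\<in>F. Q x > 0" "sum P F = sum Q F"
  shows "0 \<le> (\<Sum>x\<in>F. kl_term (P x) (Q x))"
    and "(\<Sum>x\<in>F. kl_term (P x) (Q x)) = 0 \<Longrightarrow> \<forall>x\<in>F. P x = Q x"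
proof -
  let ?gap = "\<lambda>x. kl_term (P x) (Q x) - (P x - Q x)"
  have gap_nonneg: "\<And>x. x \<in> F \<Longrightarrow> 0 \<le> ?gap x" using kl_term_ge(1) assms(2,3) by auto
  have sum_gap: "(\<Sum>x\<in>F. kl_term (P x) (Q x)) = sum ?gap F"
    using assms(4) by (simp add: sum_subtractf)
  show "0 \<le> (\<Sum>x\<in>F. kl_term (P x) (Q x))" unfolding sum_gap by (rule sum_nonneg) (use gap_nonneg in auto)
  assume "(\<Sum>x\<in>F. kl_term (P x) (Q x)) = 0"
  hence "\<forall>x\<in>F. ?gap x = 0" using sum_nonneg_0[OF assms(1) gap_nonneg] sum_gap by auto
  thus "\<forall>x\<in>F. P x = Q x" using kl_term_ge(2) assms(2,3) by auto
qed

section \<open>Paths and bridge walks\<close>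

lemma finite_paths: "finite (paths n N)"
proof -
  have "paths n N = {xs. set xs \<subseteq> {1..n} \<and> length xs = Suc N}" unfolding paths_def by auto
  thus ?thesis using finite_lists_length_eq[of "{1..n}" "Suc N"] by simp
qed

lemma nth_mem_paths: "xs \<in> paths n N \<Longrightarrow> t \<le> N \<Longrightarrow> xs ! t \<in> {1..n}"
  unfolding paths_def by (auto simp: subset_iff)

lemma sum_walk_weights_eq_matpow:
  assumes "i \<in> {1..n}" "j \<in> {1..n}"
  shows "(\<Sum>xs\<in>{xs\<in>paths n k. xs!0 = i \<and> xs!k = j}. \<Prod>t<k. A (xs!t) (xs!Suc t))
         = matpow n A k i j"
  using assms(2)
proof (induction k arbitrary: j)
  case 0
  have "{xs\<in>paths n 0. xs!0 = i \<and> xs!0 = j} = (if i = j then {[i]} else {})"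
    using assms(1) by (auto simp: paths_def length_Suc_conv)
  thus ?case by simp
next
  case (Suc k)
  let ?P = "{ys\<in>paths n k. ys!0 = i}"
  let ?W = "\<lambda>k ys. \<Prod>t<k. A (ys!t) (ys!Suc t)"
  have split_last: "{xs\<in>paths n (Suc k). xs!0 = i \<and> xs!Suc k = j} = (\<lambda>ys. ys @ [j]) ` ?P"
  proof (intro equalityI subsetI)
    fix xs assume xs: "xs \<in> {xs\<in>paths n (Suc k). xs!0 = i \<and> xs!Suc k = j}"
    hence len: "length xs = Suc (Suc k)" by (simp add: paths_def)
    have "xs = take (Suc k) xs @ [j]"
      using take_Suc_conv_app_nth[of "Suc k" xs] len xs by simp
    moreover have "take (Suc k) xs \<in> ?P" using xs len
      by (auto simp: paths_def dest: in_set_takeD)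
    ultimately show "xs \<in> (\<lambda>ys. ys @ [j]) ` ?P" by blast
  qed (use Suc.prems in \<open>auto simp: paths_def nth_append\<close>)
  have weight_snoc: "?W (Suc k) (ys @ [j]) = ?W k ys * A (ys!k) j" if "ys \<in> ?P" for ys
  proof -
    have len: "length ys = Suc k" using that by (simp add: paths_def)
    have "(\<Prod>t<k. A ((ys @ [j])!t) ((ys @ [j])!Suc t)) = ?W k ys"
      by (rule prod.cong) (auto simp: nth_append len)
    thus ?thesis by (simp add: nth_append len)
  qed
  have "(\<Sum>xs\<in>{xs\<in>paths n (Suc k). xs!0 = i \<and> xs!Suc k = j}. ?W (Suc k) xs)
        = (\<Sum>ys\<in>?P. ?W (Suc k) (ys @ [j]))"
    unfolding split_last using sum.reindex[of "\<lambda>ys. ys @ [j]" ?P] by (simp add: inj_on_def)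
  also have "\<dots> = (\<Sum>ys\<in>?P. ?W k ys * A (ys!k) j)"
    by (rule sum.cong[OF refl weight_snoc])
  also have "\<dots> = (\<Sum>l\<in>{1..n}. \<Sum>ys\<in>{ys\<in>?P. ys!k = l}. ?W k ys * A (ys!k) j)"
    by (rule sum.group[symmetric]) (use finite_paths[of n k] nth_mem_paths[of _ n k] in auto)
  also have "\<dots> = (\<Sum>l\<in>{1..n}. matpow n A k i l * A l j)"
  proof (rule sum.cong[OF refl])
    fix l assume l: "l \<in> {1..n}"
    have "(\<Sum>ys\<in>{ys\<in>?P. ys!k = l}. ?W k ys * A (ys!k) j)
          = (\<Sum>ys\<in>{ys\<in>paths n k. ys!0 = i \<and> ys!k = l}. ?W k ys) * A l j"
      by (simp add: sum_distrib_right conj_ac)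
    thus "(\<Sum>ys\<in>{ys\<in>?P. ys!k = l}. ?W k ys * A (ys!k) j) = matpow n A k i l * A l j"
      using Suc.IH[OF l] by simp
  qed
  finally show ?case by simp
qed

definition bridge_walks :: "nat \<Rightarrow> nat \<Rightarrow> (nat \<Rightarrow> nat \<Rightarrow> real) \<Rightarrow> nat \<Rightarrow> nat \<Rightarrow> nat list set" where
  "bridge_walks n N A a b =
     {xs\<in>paths n N. xs!0 = a \<and> xs!N = b \<and> (\<forall>t<N. A (xs!t) (xs!Suc t) = 1)}"

lemma bridge_walks_subset_paths: "bridge_walks n N A a b \<subseteq> paths n N"
  unfolding bridge_walks_def by auto

lemma adjacency_nonneg:
  assumes "is_adjacency_matrix n A" "i \<in> {1..n}" "j \<in> {1..n}"
  shows "A i j \<ge> 0"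
proof -
  have "A i j = 0 \<or> A i j = 1" using assms unfolding is_adjacency_matrix_def by blast
  thus ?thesis by auto
qed

lemma adjacency_missing_edge:
  assumes "is_adjacency_matrix n A" "xs \<in> paths n N" "\<not> (\<forall>t<N. A (xs!t) (xs!Suc t) = 1)"
  obtains t where "t < N" "A (xs!t) (xs!Suc t) = 0"
  using assms nth_mem_paths[OF assms(2)] unfolding is_adjacency_matrix_def
  by (metis Suc_leI less_imp_le_nat)

lemma card_bridge_walks:
  assumes "is_adjacency_matrix n A" "a \<in> {1..n}" "b \<in> {1..n}"
  shows "real (card (bridge_walks n N A a b)) = matpow n A N a b"
proof -
  let ?S = "{xs\<in>paths n N. xs!0 = a \<and> xs!N = b}"
  let ?W = "\<lambda>xs. \<Prod>t<N. A (xs!t) (xs!Suc t)"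
  let ?F = "bridge_walks n N A a b"
  have fin: "finite ?S" using finite_paths[of n N] by simp
  have sub: "?F \<subseteq> ?S" unfolding bridge_walks_def by auto
  have "?W xs = 0" if "xs \<in> ?S - ?F" for xs
  proof -
    from that have "xs \<in> paths n N" "\<not> (\<forall>t<N. A (xs!t) (xs!Suc t) = 1)"
      unfolding bridge_walks_def by auto
    then obtain t where "t < N" "A (xs!t) (xs!Suc t) = 0"
      using adjacency_missing_edge[OF assms(1)] by blast
    thus ?thesis by (intro prod_zero) auto
  qed
  hence "sum ?W ?S = sum ?W ?F"
    by (intro sum.mono_neutral_right[OF fin sub]) auto
  hence "matpow n A N a b = sum ?W ?F"
    using sum_walk_weights_eq_matpow[OF assms(2,3), where k = N and A = A] by simp
  also have "\<dots> = real (card ?F)" by (simp add: bridge_walks_def)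
  finally show ?thesis by simp
qed

lemma prod_telescope:
  fixes f :: "nat \<Rightarrow> real"
  assumes "\<forall>t\<le>N. f t \<noteq> 0" "lam \<noteq> 0"
  shows "(\<Prod>t<N. f (Suc t) / (lam * f t)) = f N / (f 0 * lam ^ N)"
  using assms
proof (induction N)
  case (Suc N)
  have "f N \<noteq> 0" "f 0 \<noteq> 0" using Suc.prems by auto
  thus ?case using Suc by (simp add: field_simps)
qed simp

lemma M_RB_bridge_walk:
  assumes "xs \<in> bridge_walks n N A a b" "\<forall>i\<in>{1..n}. v i > 0" "lam \<noteq> 0"
  shows "M_RB N A lam u v xs = u a * v b / lam ^ N"
proof -
  have xs: "xs \<in> paths n N" "xs!0 = a" "xs!N = b" "\<forall>t<N. A (xs!t) (xs!Suc t) = 1"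
    using assms(1) unfolding bridge_walks_def by auto
  have "(\<Prod>t<N. v (xs!Suc t) / (lam * v (xs!t))) = v (xs!N) / (v (xs!0) * lam ^ N)"
    by (rule prod_telescope[where f = "\<lambda>t. v (xs!t)"])
      (use nth_mem_paths[OF xs(1)] assms(2,3) in fastforce)+
  moreover have "v (xs!0) > 0" using nth_mem_paths[OF xs(1), of 0] assms(2) by simp
  ultimately show ?thesis using xs(2-4) unfolding M_RB_def by simp
qed

lemma M_RB_missing_edge:
  assumes "is_adjacency_matrix n A" "xs \<in> paths n N" "\<not> (\<forall>t<N. A (xs!t) (xs!Suc t) = 1)"
  shows "M_RB N A lam u v xs = 0"
proof -
  obtain t where "t < N" "A (xs!t) (xs!Suc t) = 0"
    using adjacency_missing_edge[OF assms] .
  hence "(\<Prod>t<N. v (xs!Suc t) / (lam * v (xs!t)) * A (xs!t) (xs!Suc t)) = 0"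
    by (intro prod_zero) auto
  thus ?thesis unfolding M_RB_def by simp
qed

lemma bridge_feasible_support:
  assumes "bridge_feasible n N a b Q" "xs \<in> paths n N" "Q xs \<noteq> 0"
  shows "xs!0 = a" "xs!N = b"
proof -
  have nonneg: "\<forall>x\<in>paths n N. Q x \<ge> 0"
    using assms(1) unfolding bridge_feasible_def is_prob_dist_def by auto
  have marginal_point_mass: "x = c" if "x \<in> {1..n}" "xs!k = x"
    and marginal: "(\<Sum>ys\<in>{ys\<in>paths n N. ys!k = x}. Q ys) = (if x = c then 1 else 0)" for k x c
  proof (rule ccontr)
    assume "x \<noteq> c"
    hence "(\<Sum>ys\<in>{ys\<in>paths n N. ys!k = x}. Q ys) = 0" using marginal by simp
    hence "\<forall>ys\<in>{ys\<in>paths n N. ys!k = x}. Q ys = 0"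
      using nonneg finite_paths[of n N] by (subst (asm) sum_nonneg_eq_0_iff) auto
    thus False using assms(2,3) that(2) by auto
  qed
  show "xs!0 = a" using marginal_point_mass[of "xs!0" 0 a] assms(1) nth_mem_paths[OF assms(2), of 0]
    unfolding bridge_feasible_def by auto
  show "xs!N = b" using marginal_point_mass[of "xs!N" N b] assms(1) nth_mem_paths[OF assms(2), of N]
    unfolding bridge_feasible_def by auto
qed

definition uniform_on :: "'a set \<Rightarrow> 'a \<Rightarrow> real" where
  "uniform_on F x = (if x \<in> F then 1 / real (card F) else 0)"

lemma sum_uniform_on:
  assumes "finite T"
  shows "(\<Sum>x\<in>T. uniform_on F x) = real (card (T \<inter> F)) / real (card F)"
  using assms by (simp add: uniform_on_def sum.If_cases Int_def)

lemma bridge_feasible_uniform_on_bridge_walks: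
  assumes "bridge_walks n N A a b \<noteq> {}"
  shows "bridge_feasible n N a b (uniform_on (bridge_walks n N A a b))"
proof -
  let ?F = "bridge_walks n N A a b"
  have card: "card ?F > 0" using assms finite_paths[of n N]
    by (simp add: card_gt_0_iff bridge_walks_def)
  have sum_one: "(\<Sum>x\<in>T. uniform_on ?F x) = 1" if "?F \<subseteq> T" "T \<subseteq> paths n N" for T
    using that card sum_uniform_on[of T ?F] finite_subset[OF that(2) finite_paths]
    by (simp add: Int_absorb1)
  have sum_zero: "(\<Sum>x\<in>T. uniform_on ?F x) = 0" if "T \<inter> ?F = {}" "T \<subseteq> paths n N" for T
    using that sum_uniform_on[of T ?F] finite_subset[OF that(2) finite_paths] by simp
  have marginal: "(\<Sum>xs\<in>{xs\<in>paths n N. xs!k = y}. uniform_on ?F xs) = (if y = c then 1 else 0)"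
    if "\<forall>xs\<in>?F. xs!k = c" for k y c
  proof (cases "y = c")
    case True
    have "?F \<subseteq> {xs\<in>paths n N. xs!k = y}" using that True bridge_walks_subset_paths[of n N A a b] by auto
    thus ?thesis using sum_one True by auto
  next
    case False
    have "{xs\<in>paths n N. xs!k = y} \<inter> ?F = {}" using that False by auto
    thus ?thesis using sum_zero False by auto
  qed
  show ?thesis
    unfolding bridge_feasible_def is_prob_dist_def
    using sum_one[of "paths n N"] marginal[of 0 a] marginal[of N b]
    by (auto simp: uniform_on_def bridge_walks_def)
qed

section \<open>The Ruelle-Bowen bridge\<close>

locale ruelle_bowen_bridge =
  fixes n N :: nat and A :: "nat \<Rightarrow> nat \<Rightarrow> real" and lam :: real
    and u v :: "nat \<Rightarrow> real" and a b :: nat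
  assumes adjacency: "is_adjacency_matrix n A"
    and endpoints: "a \<in> {1..n}" "b \<in> {1..n}"
    and lam_pos: "lam > 0"
    and u_pos: "u a > 0"
    and v_pos: "\<forall>i\<in>{1..n}. v i > 0"
    and walks_exist: "matpow n A N a b > 0"
begin

abbreviation "F \<equiv> bridge_walks n N A a b"
abbreviation "M \<equiv> M_RB N A lam u v"
abbreviation "c \<equiv> u a * v b / lam ^ N"

lemma c_pos: "c > 0"
  using u_pos v_pos endpoints lam_pos by simp

lemma card_F_pos: "real (card F) > 0"
  using card_bridge_walks[OF adjacency endpoints] walks_exist by simp

lemma feasible_support_outside_F:
  assumes "bridge_feasible n N a b Q" "x \<in> paths n N" "Q x \<noteq> 0" "x \<notin> F"
  shows "M x = 0"
  using assms bridge_feasible_support[OF assms(1-3)] M_RB_missing_edge[OF adjacency assms(2)]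
  unfolding bridge_walks_def by auto

lemma feasible_mass_on_F:
  assumes Q: "bridge_feasible n N a b Q" and supp: "\<forall>x\<in>paths n N. Q x \<noteq> 0 \<longrightarrow> x \<in> F"
  shows "\<forall>x\<in>F. Q x \<ge> 0" "(\<Sum>x\<in>F. Q x) = 1"
proof -
  show "\<forall>x\<in>F. Q x \<ge> 0"
    using Q bridge_walks_subset_paths[of n N A a b] unfolding bridge_feasible_def is_prob_dist_def by auto
  have "(\<Sum>x\<in>paths n N. Q x) = (\<Sum>x\<in>F. Q x)"
    by (rule sum.mono_neutral_right[OF finite_paths bridge_walks_subset_paths]) (use supp in auto)
  thus "(\<Sum>x\<in>F. Q x) = 1"
    using Q unfolding bridge_feasible_def is_prob_dist_def by simp
qed

lemma gibbs_on_F: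
  assumes "bridge_feasible n N a b Q" "\<forall>x\<in>paths n N. Q x \<noteq> 0 \<longrightarrow> x \<in> F"
  shows "0 \<le> (\<Sum>x\<in>F. kl_term (Q x) (1 / card F))"
    and "(\<Sum>x\<in>F. kl_term (Q x) (1 / card F)) = 0 \<Longrightarrow> \<forall>x\<in>F. Q x = 1 / card F"
proof -
  have "finite F" using finite_subset[OF bridge_walks_subset_paths finite_paths] .
  moreover have "(\<Sum>x\<in>F. Q x) = (\<Sum>x\<in>F. 1 / real (card F))"
    using feasible_mass_on_F[OF assms] card_F_pos by simp
  moreover have "\<forall>x\<in>F. 1 / real (card F) > 0" using card_F_pos by simp
  ultimately show "0 \<le> (\<Sum>x\<in>F. kl_term (Q x) (1 / card F))"
    and "(\<Sum>x\<in>F. kl_term (Q x) (1 / card F)) = 0 \<Longrightarrow> \<forall>x\<in>F. Q x = 1 / card F"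
    using gibbs_inequality[of F Q "\<lambda>_. 1 / card F"] feasible_mass_on_F(1)[OF assms]
    by blast+
qed

lemma rel_entropy_M_RB:
  assumes Q: "bridge_feasible n N a b Q" and supp: "\<forall>x\<in>paths n N. Q x \<noteq> 0 \<longrightarrow> x \<in> F"
  shows "rel_entropy (paths n N) Q M
         = ereal ((\<Sum>x\<in>F. kl_term (Q x) (1 / card F)) - ln (card F * c))"
proof -
  have M_F: "M x = c" if "x \<in> F" for x
    using M_RB_bridge_walk[OF that v_pos] lam_pos by simp
  have "rel_entropy (paths n N) Q M = ereal (\<Sum>x\<in>paths n N. kl_term (Q x) (M x))"
    using supp M_F c_pos by (intro rel_entropy_eq_sum_kl_term) fastforce
  also have "(\<Sum>x\<in>paths n N. kl_term (Q x) (M x)) = (\<Sum>x\<in>F. kl_term (Q x) c)"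
    by (rule sum.mono_neutral_cong_right[OF finite_paths bridge_walks_subset_paths])
      (use supp M_F in \<open>auto simp: kl_term_def\<close>)
  also have "\<dots> = (\<Sum>x\<in>F. kl_term (Q x) (1 / card F) + Q x * ln ((1 / card F) / c))"
    using c_pos card_F_pos feasible_mass_on_F(1)[OF Q supp]
    by (intro sum.cong refl kl_term_change_reference) auto
  also have "\<dots> = (\<Sum>x\<in>F. kl_term (Q x) (1 / card F)) - ln (card F * c)"
    using feasible_mass_on_F(2)[OF Q supp] c_pos card_F_pos
    by (simp add: sum.distrib ln_div flip: sum_distrib_right)
  finally show ?thesis .
qed

lemma rel_entropy_M_RB_infinite:
  assumes "bridge_feasible n N a b Q" "\<not> (\<forall>x\<in>paths n N. Q x \<noteq> 0 \<longrightarrow> x \<in> F)"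
  shows "rel_entropy (paths n N) Q M = \<infinity>"
proof -
  obtain x where x: "x \<in> paths n N" "Q x \<noteq> 0" "x \<notin> F" using assms(2) by blast
  hence "M x = 0" using feasible_support_outside_F[OF assms(1)] by blast
  thus ?thesis unfolding rel_entropy_def using x by auto
qed

lemma rel_entropy_M_RB_ge:
  assumes "bridge_feasible n N a b Q"
  shows "ereal (- ln (card F * c)) \<le> rel_entropy (paths n N) Q M"
proof (cases "\<forall>x\<in>paths n N. Q x \<noteq> 0 \<longrightarrow> x \<in> F")
  case True
  thus ?thesis using rel_entropy_M_RB[OF assms True] gibbs_on_F(1)[OF assms True] by simp
qed (use rel_entropy_M_RB_infinite[OF assms] in simp)

lemma rel_entropy_M_RB_uniform:
  "rel_entropy (paths n N) (uniform_on F) M = ereal (- ln (card F * c))"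
proof -
  have "F \<noteq> {}" using card_F_pos by auto
  note feasible = bridge_feasible_uniform_on_bridge_walks[OF this]
  have "\<forall>x\<in>paths n N. uniform_on F x \<noteq> 0 \<longrightarrow> x \<in> F" by (simp add: uniform_on_def)
  moreover have "(\<Sum>x\<in>F. kl_term (uniform_on F x) (1 / card F)) = 0"
    by (simp add: kl_term_def uniform_on_def)
  ultimately show ?thesis using rel_entropy_M_RB[OF feasible] by simp
qed

lemma is_bridge_minimizer_uniform_on: "is_bridge_minimizer n N a b M (uniform_on F)"
proof -
  have "F \<noteq> {}" using card_F_pos by auto
  thus ?thesis
    unfolding is_bridge_minimizer_def rel_entropy_M_RB_uniform
    using bridge_feasible_uniform_on_bridge_walks rel_entropy_M_RB_ge by blast
qed

lemma bridge_minimizer_eq_uniform: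
  assumes "is_bridge_minimizer n N a b M P" "x \<in> F"
  shows "P x = 1 / card F"
proof -
  have P: "bridge_feasible n N a b P" using assms(1) unfolding is_bridge_minimizer_def by simp
  have le: "rel_entropy (paths n N) P M \<le> ereal (- ln (card F * c))"
    using assms(1) is_bridge_minimizer_uniform_on rel_entropy_M_RB_uniform
    unfolding is_bridge_minimizer_def by auto
  hence supp: "\<forall>x\<in>paths n N. P x \<noteq> 0 \<longrightarrow> x \<in> F"
    using rel_entropy_M_RB_infinite[OF P] by force
  have "(\<Sum>x\<in>F. kl_term (P x) (1 / card F)) = 0"
    using le rel_entropy_M_RB[OF P supp] gibbs_on_F(1)[OF P supp] by simp
  thus ?thesis using gibbs_on_F(2)[OF P supp] assms(2) by simp
qed

end

lemma eigenvalue_pos_of_positive_left_eigenvector: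
  fixes A :: "nat \<Rightarrow> nat \<Rightarrow> real" and u :: "nat \<Rightarrow> real"
  assumes "j \<in> {1..n}" "\<forall>i\<in>{1..n}. A i j \<ge> 0" "A j j > 0" "\<forall>i\<in>{1..n}. u i > 0"
    and "(\<Sum>i\<in>{1..n}. A i j * u i) = lam * u j"
  shows "lam > 0"
proof -
  have "0 < A j j * u j" using assms(1,3,4) by simp
  also have "\<dots> \<le> (\<Sum>i\<in>{1..n}. A i j * u i)"
    using assms(1,2,4) by (intro member_le_sum) (auto intro!: mult_nonneg_nonneg simp: less_imp_le)
  finally have "0 < lam * u j" using assms(5) by simp
  moreover have "u j > 0" using assms(1,4) by blast
  ultimately show ?thesis by (simp add: zero_less_mult_iff)
qed

theorem proposition5p4:
  fixes n N :: nat and A :: "nat \<Rightarrow> nat \<Rightarrow> real"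
    and lam :: real and u v :: "nat \<Rightarrow> real"
  assumes "n \<ge> 1"
    and "is_adjacency_matrix n A"
    and "strongly_connected n A"
    and "aperiodic n A"
    and "A n n = 1"
    and "N \<ge> 1"
    and "\<forall>i\<in>{1..n}. \<forall>j\<in>{1..n}. matpow n A N i j > 0"
    and "\<forall>i\<in>{1..n}. u i > 0" and "\<forall>i\<in>{1..n}. v i > 0"
    and "\<forall>j\<in>{1..n}. (\<Sum>i\<in>{1..n}. A i j * u i) = lam * u j"
    and "\<forall>i\<in>{1..n}. (\<Sum>j\<in>{1..n}. A i j * v j) = lam * v i"
    and "(\<Sum>i\<in>{1..n}. u i * v i) = 1"
  shows "(\<exists>P. is_bridge_minimizer n N 1 n (M_RB N A lam u v) P) \<and>
         (\<forall>P. is_bridge_minimizer n N 1 n (M_RB N A lam u v) P \<longrightarrow>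
            (\<forall>xs\<in>paths n N. xs ! 0 = 1 \<and> xs ! N = n \<and>
                (\<forall>t<N. A (xs ! t) (xs ! Suc t) = 1) \<longrightarrow>
                P xs = 1 / matpow n A N 1 n))"
proof -
  have nodes: "1 \<in> {1..n}" "n \<in> {1..n}" using assms(1) by auto
  have "\<forall>i\<in>{1..n}. A i n \<ge> 0"
    using adjacency_nonneg[OF assms(2) _ nodes(2)] by blast
  hence "lam > 0"
    using eigenvalue_pos_of_positive_left_eigenvector[of n n A u lam] assms(5,8,10) nodes by simp
  then interpret ruelle_bowen_bridge n N A lam u v 1 n
    using assms(2,7,8,9) nodes by unfold_locales auto
  have "real (card (bridge_walks n N A 1 n)) = matpow n A N 1 n"
    using card_bridge_walks[OF assms(2) nodes] .
  thus ?thesis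
    using is_bridge_minimizer_uniform_on bridge_minimizer_eq_uniform
    unfolding bridge_walks_def by auto
qed

end
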